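(* Let $a,b,\alpha,\beta$ be constants with $\alpha>0$, $\beta>0$, $\alpha\neq\beta$, $a^2\alpha^2+b^2\beta^2=1$, and let $c(v)=(a\cos\alpha v,\ a\sin\alpha v,\ b\cos\beta v,\ b\sin\beta v)$, $v\in[0,2\pi)$ (an arc-length parameterized curve in $\mathbb R^4$ with constant curvatures). Put $$\varkappa=\sqrt{a^2\alpha^4+b^2\beta^4},\qquad \tau=\frac{ab\alpha\beta(\alpha^2-\beta^2)}{\varkappa},\qquad \sigma=\frac{\alpha\beta}{\varkappa},$$ $$n(v)=\tfrac1\varkappa(-a\alpha^2\cos\alpha v,-a\alpha^2\sin\alpha v,-b\beta^2\cos\beta v,-b\beta^2\sin\beta v),\quad b_1(v)=\tfrac1\varkappa(b\beta^2\cos\alpha v,b\beta^2\sin\alpha v,-a\alpha^2\cos\beta v,-a\alpha^2\sin\beta v)$$ (the second and fourth Frenet vectors of $c$). Let $A(u),B(u)$ be smooth functions on an interval $J$ with $A'^2+B'^2>0$ and $(\varkappa A-1)^2+(\tau A-\sigma B)^2>0$ on $J$, and consider the surface $$M^2: z(u,v)=c(v)+A(u)\,n(v)+B(u)\,b_1(v),\qquad u\in J,\ v\in[0,2\pi).$$ Then $M^2$ is minimal if and only if, on $J$, $$\frac{A''B'-A'B''}{A'^2+B'^2}=\frac{(\varkappa A-1)\varkappa B'+(\tau A-\sigma B)(\sigma A'+\tau B')}{(\varkappa A-1)^2+(\tau A-\sigma B)^2}.$$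
   Context: Minimal means that the mean curvature vector $H=\tfrac12(\sigma_{II}(x,x)+\sigma_{II}(y,y))$ vanishes, where $\sigma_{II}$ is the second fundamental form of the surface in $\mathbb R^4$ (with its standard Euclidean metric) and $x,y$ is an orthonormal tangent basis. *)

theory Defs
  imports "HOL-Analysis.Analysis"
begin

type_synonym surf = "real \<times> real \<Rightarrow> real^4"

definition zu :: "surf \<Rightarrow> real \<times> real \<Rightarrow> real^4" where
  "zu z p = vector_derivative (\<lambda>s. z (s, snd p)) (at (fst p))"

definition zv :: "surf \<Rightarrow> real \<times> real \<Rightarrow> real^4" where
  "zv z p = vector_derivative (\<lambda>t. z (fst p, t)) (at (snd p))"

definition zuu :: "surf \<Rightarrow> real \<times> real \<Rightarrow> real^4" where
  "zuu z p = vector_derivative (\<lambda>s. zu z (s, snd p)) (at (fst p))"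

definition zuv :: "surf \<Rightarrow> real \<times> real \<Rightarrow> real^4" where
  "zuv z p = vector_derivative (\<lambda>t. zu z (fst p, t)) (at (snd p))"

definition zvv :: "surf \<Rightarrow> real \<times> real \<Rightarrow> real^4" where
  "zvv z p = vector_derivative (\<lambda>t. zv z (fst p, t)) (at (snd p))"

definition gE :: "surf \<Rightarrow> real \<times> real \<Rightarrow> real" where "gE z p = zu z p \<bullet> zu z p"
definition gF :: "surf \<Rightarrow> real \<times> real \<Rightarrow> real" where "gF z p = zu z p \<bullet> zv z p"
definition gG :: "surf \<Rightarrow> real \<times> real \<Rightarrow> real" where "gG z p = zv z p \<bullet> zv z p"

text \<open>Orthogonal projection onto the normal plane (complement of span of zu, zv).\<close>
definition normal_part :: "surf \<Rightarrow> real \<times> real \<Rightarrow> real^4 \<Rightarrow> real^4" where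
  "normal_part z p w =
     (let E = gE z p; F = gF z p; G = gG z p; D = E * G - F\<^sup>2;
          a = w \<bullet> zu z p; b = w \<bullet> zv z p
      in w - ((G * a - F * b) / D) *\<^sub>R zu z p - ((E * b - F * a) / D) *\<^sub>R zv z p)"

text \<open>Mean curvature vector H = 1/2 trace of the second fundamental form
  w.r.t. the induced metric, i.e. 1/2 g^{ij} sigma(d_i, d_j).\<close>
definition mean_curvature_vector :: "surf \<Rightarrow> real \<times> real \<Rightarrow> real^4" where
  "mean_curvature_vector z p =
     (let E = gE z p; F = gF z p; G = gG z p; D = E * G - F\<^sup>2
      in (1 / (2 * D)) *\<^sub>R
           (G *\<^sub>R normal_part z p (zuu z p) - (2 * F) *\<^sub>R normal_part z p (zuv z p)
            + E *\<^sub>R normal_part z p (zvv z p)))"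

definition minimal_on :: "surf \<Rightarrow> (real \<times> real) set \<Rightarrow> bool" where
  "minimal_on z U \<longleftrightarrow> (\<forall>p\<in>U. mean_curvature_vector z p = 0)"

definition kap :: "real \<Rightarrow> real \<Rightarrow> real \<Rightarrow> real \<Rightarrow> real" where
  "kap a b \<alpha> \<beta> = sqrt (a\<^sup>2 * \<alpha>^4 + b\<^sup>2 * \<beta>^4)"

definition tau :: "real \<Rightarrow> real \<Rightarrow> real \<Rightarrow> real \<Rightarrow> real" where
  "tau a b \<alpha> \<beta> = a * b * \<alpha> * \<beta> * (\<alpha>\<^sup>2 - \<beta>\<^sup>2) / kap a b \<alpha> \<beta>"

definition sig :: "real \<Rightarrow> real \<Rightarrow> real \<Rightarrow> real \<Rightarrow> real" where
  "sig a b \<alpha> \<beta> = \<alpha> * \<beta> / kap a b \<alpha> \<beta>"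

definition curve_c :: "real \<Rightarrow> real \<Rightarrow> real \<Rightarrow> real \<Rightarrow> real \<Rightarrow> real^4" where
  "curve_c a b \<alpha> \<beta> v = vector [a * cos (\<alpha> * v), a * sin (\<alpha> * v), b * cos (\<beta> * v), b * sin (\<beta> * v)]"

definition frame_n :: "real \<Rightarrow> real \<Rightarrow> real \<Rightarrow> real \<Rightarrow> real \<Rightarrow> real^4" where
  "frame_n a b \<alpha> \<beta> v = (1 / kap a b \<alpha> \<beta>) *\<^sub>R
     vector [- a * \<alpha>\<^sup>2 * cos (\<alpha> * v), - a * \<alpha>\<^sup>2 * sin (\<alpha> * v),
             - b * \<beta>\<^sup>2 * cos (\<beta> * v), - b * \<beta>\<^sup>2 * sin (\<beta> * v)]"

definition frame_b1 :: "real \<Rightarrow> real \<Rightarrow> real \<Rightarrow> real \<Rightarrow> real \<Rightarrow> real^4" where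
  "frame_b1 a b \<alpha> \<beta> v = (1 / kap a b \<alpha> \<beta>) *\<^sub>R
     vector [b * \<beta>\<^sup>2 * cos (\<alpha> * v), b * \<beta>\<^sup>2 * sin (\<alpha> * v),
             - a * \<alpha>\<^sup>2 * cos (\<beta> * v), - a * \<alpha>\<^sup>2 * sin (\<beta> * v)]"

definition surface_z :: "real \<Rightarrow> real \<Rightarrow> real \<Rightarrow> real \<Rightarrow> (real \<Rightarrow> real) \<Rightarrow> (real \<Rightarrow> real) \<Rightarrow> surf" where
  "surface_z a b \<alpha> \<beta> A B p =
     curve_c a b \<alpha> \<beta> (snd p) + A (fst p) *\<^sub>R frame_n a b \<alpha> \<beta> (snd p)
       + B (fst p) *\<^sub>R frame_b1 a b \<alpha> \<beta> (snd p)"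

end

theory Submission
  imports Defs
begin

text \<open>
  Rotating orthonormal frames of the coordinate planes \<open>x1x2\<close> and \<open>x3x4\<close>,
    \<open>e1 = (cos \<alpha>v, sin \<alpha>v, 0, 0)\<close>, \<open>f1 = e1'/\<alpha>\<close>, \<open>e2 = (0, 0, cos \<beta>v, sin \<beta>v)\<close>,
    \<open>f2 = e2'/\<beta>\<close>,
  give \<open>c = a e1 + b e2\<close>, while \<open>n\<close> and \<open>b1\<close> are constant combinations of \<open>e1, e2\<close>.
  Hence the surface has the form \<open>z(u,v) = P(u) e1(v) + Q(u) e2(v)\<close> (a \<open>rot_surface\<close>).

  Applied to \<open>rot_surface\<close> this becomes an ODE in \<open>P, Q\<close>.
  Finally, the coordinates of \<open>x n + y b1\<close> in \<open>e1, e2\<close> depend on \<open>(x, y)\<close> through a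
  rotation matrix, and two algebraic identities (using \<open>a\<^sup>2\<alpha>\<^sup>2 + b\<^sup>2\<beta>\<^sup>2 = 1\<close>) translate the
  ODE for \<open>P, Q\<close> into the stated one for \<open>A, B\<close>.  The condition does not depend on \<open>v\<close>,
  so minimality on \<open>J \<times> [0, 2\<pi>)\<close> is equivalent to the ODE on \<open>J\<close>.
\<close>

definition rot_e :: "4 \<Rightarrow> 4 \<Rightarrow> real \<Rightarrow> real \<Rightarrow> real^4" where
  "rot_e i j \<omega> v = cos (\<omega> * v) *\<^sub>R axis i 1 + sin (\<omega> * v) *\<^sub>R axis j 1"

definition rot_f :: "4 \<Rightarrow> 4 \<Rightarrow> real \<Rightarrow> real \<Rightarrow> real^4" where
  "rot_f i j \<omega> v = (- sin (\<omega> * v)) *\<^sub>R axis i 1 + cos (\<omega> * v) *\<^sub>R axis j 1"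

lemma rot_frame_unit:
  assumes "i \<noteq> j"
  shows "rot_e i j \<omega> v \<bullet> rot_e i j \<omega> v = 1" "rot_f i j \<omega> v \<bullet> rot_f i j \<omega> v = 1"
    "rot_e i j \<omega> v \<bullet> rot_f i j \<omega> v = 0"
  using assms
  by (auto simp: rot_e_def rot_f_def inner_add_left inner_add_right inner_diff_left
      inner_diff_right inner_axis_axis power2_eq_square[symmetric])

lemma rot_frame_orthogonal:
  assumes "i \<noteq> k" "i \<noteq> l" "j \<noteq> k" "j \<noteq> l"
  shows "rot_e i j \<omega> v \<bullet> rot_e k l \<mu> v = 0" "rot_e i j \<omega> v \<bullet> rot_f k l \<mu> v = 0"
    "rot_f i j \<omega> v \<bullet> rot_e k l \<mu> v = 0" "rot_f i j \<omega> v \<bullet> rot_f k l \<mu> v = 0"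
  using assms
  by (auto simp: rot_e_def rot_f_def inner_add_left inner_add_right inner_diff_left
      inner_diff_right inner_axis_axis)

lemma has_vector_derivative_rot_e:
  "(rot_e i j \<omega> has_vector_derivative \<omega> *\<^sub>R rot_f i j \<omega> v) (at v)"
  unfolding rot_e_def rot_f_def by (auto intro!: derivative_eq_intros simp: algebra_simps)

lemma has_vector_derivative_rot_f:
  "(rot_f i j \<omega> has_vector_derivative - \<omega> *\<^sub>R rot_e i j \<omega> v) (at v)"
  unfolding rot_e_def rot_f_def by (auto intro!: derivative_eq_intros simp: algebra_simps)

text \<open>Orthonormality of four vectors, in the order used for surfaces below: \<open>ea, eb\<close> will carry
  \<open>z_u, z_uu, z_vv\<close> and \<open>fa, fb\<close> will carry \<open>z_v\<close>.\<close>
definition orthonormal_frame :: "real^4 \<Rightarrow> real^4 \<Rightarrow> real^4 \<Rightarrow> real^4 \<Rightarrow> bool" where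
  "orthonormal_frame ea eb fa fb \<longleftrightarrow>
     ea \<bullet> ea = 1 \<and> eb \<bullet> eb = 1 \<and> fa \<bullet> fa = 1 \<and> fb \<bullet> fb = 1 \<and>
     ea \<bullet> eb = 0 \<and> ea \<bullet> fa = 0 \<and> ea \<bullet> fb = 0 \<and> eb \<bullet> fa = 0 \<and> eb \<bullet> fb = 0 \<and> fa \<bullet> fb = 0"

lemma orthonormal_frame_inner:
  assumes "orthonormal_frame ea eb fa fb"
  shows "ea \<bullet> ea = 1" "eb \<bullet> eb = 1" "fa \<bullet> fa = 1" "fb \<bullet> fb = 1"
    "ea \<bullet> eb = 0" "ea \<bullet> fa = 0" "ea \<bullet> fb = 0" "eb \<bullet> fa = 0" "eb \<bullet> fb = 0" "fa \<bullet> fb = 0"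
    "eb \<bullet> ea = 0" "fa \<bullet> ea = 0" "fb \<bullet> ea = 0" "fa \<bullet> eb = 0" "fb \<bullet> eb = 0" "fb \<bullet> fa = 0"
  using assms by (simp_all add: orthonormal_frame_def inner_commute)

lemma rot_orthonormal_frame:
  "orthonormal_frame (rot_e 1 2 \<alpha> v) (rot_e 3 4 \<beta> v) (rot_f 1 2 \<alpha> v) (rot_f 3 4 \<beta> v)"
  unfolding orthonormal_frame_def by (simp add: rot_frame_unit rot_frame_orthogonal)

context
  fixes z :: surf and p :: "real \<times> real" and ea eb fa fb :: "real^4" and x1 x2 y1 y2 :: real
  assumes frame: "orthonormal_frame ea eb fa fb"
    and zu: "zu z p = x1 *\<^sub>R ea + x2 *\<^sub>R eb" and zv: "zv z p = y1 *\<^sub>R fa + y2 *\<^sub>R fb"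
begin

lemma first_fundamental_form_in_frame:
  "gE z p = x1\<^sup>2 + x2\<^sup>2" "gF z p = 0" "gG z p = y1\<^sup>2 + y2\<^sup>2"
  using orthonormal_frame_inner[OF frame]
  by (simp_all add: gE_def gF_def gG_def zu zv inner_add_left inner_add_right power2_eq_square)

lemma normal_part_in_frame:
  assumes E: "x1\<^sup>2 + x2\<^sup>2 > 0" and G: "y1\<^sup>2 + y2\<^sup>2 > 0"
  shows "normal_part z p (w1 *\<^sub>R ea + w2 *\<^sub>R eb)
           = ((x1 * w2 - x2 * w1) / (x1\<^sup>2 + x2\<^sup>2)) *\<^sub>R (x1 *\<^sub>R eb - x2 *\<^sub>R ea)"
proof -
  note ip = inner_add_left inner_add_right inner_scaleR_left inner_scaleR_right
    orthonormal_frame_inner[OF frame]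
  define E where "E = x1\<^sup>2 + x2\<^sup>2"
  define c where "c = (w1 * x1 + w2 * x2) / E"
  define d where "d = (x1 * w2 - x2 * w1) / E"
  have E0: "E \<noteq> 0" using E by (auto simp: E_def)
  have "normal_part z p (w1 *\<^sub>R ea + w2 *\<^sub>R eb) = (w1 *\<^sub>R ea + w2 *\<^sub>R eb) - c *\<^sub>R zu z p"
    using E G unfolding normal_part_def Let_def first_fundamental_form_in_frame E_def[symmetric]
    by (auto simp: zu zv ip c_def)
  also have "\<dots> = (w1 - c * x1) *\<^sub>R ea + (w2 - c * x2) *\<^sub>R eb"
    by (simp add: zu algebra_simps)
  also have "\<dots> = (- d * x2) *\<^sub>R ea + (d * x1) *\<^sub>R eb"
  proof -
    have "w1 - c * x1 = (w1 * E - (w1 * x1 + w2 * x2) * x1) / E"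
      "w2 - c * x2 = (w2 * E - (w1 * x1 + w2 * x2) * x2) / E"
      "d * x1 = (x1 * w2 - x2 * w1) * x1 / E" "- d * x2 = - (x1 * w2 - x2 * w1) * x2 / E"
      using E0 by (simp_all add: c_def d_def field_simps)
    then have "w1 - c * x1 = - d * x2" "w2 - c * x2 = d * x1"
      by (simp_all add: E_def power2_eq_square algebra_simps)
    then show ?thesis by simp
  qed
  also have "\<dots> = d *\<^sub>R (x1 *\<^sub>R eb - x2 *\<^sub>R ea)"
    by (simp add: algebra_simps)
  finally show ?thesis by (simp add: d_def E_def)
qed

text \<open>The mean curvature vector is a multiple of the normal \<open>x1 eb - x2 ea\<close>, so minimality
  at \<open>p\<close> reduces to one scalar equation.\<close>
lemma mean_curvature_zero_iff_in_frame:
  assumes zuu: "zuu z p = w1 *\<^sub>R ea + w2 *\<^sub>R eb" and zvv: "zvv z p = r1 *\<^sub>R ea + r2 *\<^sub>R eb"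
    and E: "x1\<^sup>2 + x2\<^sup>2 > 0" and G: "y1\<^sup>2 + y2\<^sup>2 > 0"
  shows "mean_curvature_vector z p = 0 \<longleftrightarrow>
           (y1\<^sup>2 + y2\<^sup>2) * (x1 * w2 - x2 * w1) + (x1\<^sup>2 + x2\<^sup>2) * (x1 * r2 - x2 * r1) = 0"
proof -
  define E where "E = x1\<^sup>2 + x2\<^sup>2"
  define G where "G = y1\<^sup>2 + y2\<^sup>2"
  define \<nu> where "\<nu> = x1 *\<^sub>R eb - x2 *\<^sub>R ea"
  define S where "S = G * (x1 * w2 - x2 * w1) + E * (x1 * r2 - x2 * r1)"
  have \<nu>: "\<nu> \<bullet> \<nu> = E"
    using orthonormal_frame_inner[OF frame]
    by (simp add: \<nu>_def E_def inner_diff_left inner_diff_right power2_eq_square)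
  have "mean_curvature_vector z p
          = (1 / (2 * E * G)) *\<^sub>R ((G * ((x1 * w2 - x2 * w1) / E) + E * ((x1 * r2 - x2 * r1) / E)) *\<^sub>R \<nu>)"
    unfolding mean_curvature_vector_def Let_def first_fundamental_form_in_frame zuu zvv
      normal_part_in_frame[OF E G] E_def[symmetric] G_def[symmetric] \<nu>_def[symmetric]
    by (simp add: scaleR_add_left)
  also have "\<dots> = (S / (2 * E * G * E)) *\<^sub>R \<nu>"
    using E G by (simp add: S_def E_def[symmetric] G_def[symmetric] field_simps)
  finally have H: "mean_curvature_vector z p = (S / (2 * E * G * E)) *\<^sub>R \<nu>" .
  have "\<nu> \<noteq> 0" "E \<noteq> 0" "G \<noteq> 0" using \<nu> E G by (auto simp: E_def G_def)
  then have "mean_curvature_vector z p = 0 \<longleftrightarrow> S = 0" by (simp add: H)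
  then show ?thesis by (simp add: S_def E_def G_def)
qed

end

definition rot_surface :: "real \<Rightarrow> real \<Rightarrow> (real \<Rightarrow> real) \<Rightarrow> (real \<Rightarrow> real) \<Rightarrow> surf" where
  "rot_surface \<alpha> \<beta> P Q p = P (fst p) *\<^sub>R rot_e 1 2 \<alpha> (snd p) + Q (fst p) *\<^sub>R rot_e 3 4 \<beta> (snd p)"

lemma rot_surface_zv:
  "zv (rot_surface \<alpha> \<beta> P Q) (u, v) = (\<alpha> * P u) *\<^sub>R rot_f 1 2 \<alpha> v + (\<beta> * Q u) *\<^sub>R rot_f 3 4 \<beta> v"
proof -
  have "((\<lambda>t. rot_surface \<alpha> \<beta> P Q (u, t)) has_vector_derivative
          (\<alpha> * P u) *\<^sub>R rot_f 1 2 \<alpha> v + (\<beta> * Q u) *\<^sub>R rot_f 3 4 \<beta> v) (at v)"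
    unfolding rot_surface_def
    by (auto intro!: derivative_eq_intros has_vector_derivative_rot_e simp: algebra_simps)
  then show ?thesis by (simp add: zv_def vector_derivative_at)
qed

lemma rot_surface_zvv:
  "zvv (rot_surface \<alpha> \<beta> P Q) (u, v) = (- \<alpha>\<^sup>2 * P u) *\<^sub>R rot_e 1 2 \<alpha> v + (- \<beta>\<^sup>2 * Q u) *\<^sub>R rot_e 3 4 \<beta> v"
proof -
  have "((\<lambda>t. zv (rot_surface \<alpha> \<beta> P Q) (u, t)) has_vector_derivative
          (- \<alpha>\<^sup>2 * P u) *\<^sub>R rot_e 1 2 \<alpha> v + (- \<beta>\<^sup>2 * Q u) *\<^sub>R rot_e 3 4 \<beta> v) (at v)"
    unfolding rot_surface_zv
    by (auto intro!: derivative_eq_intros has_vector_derivative_rot_f simp: power2_eq_square algebra_simps)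
  then show ?thesis by (simp add: zvv_def vector_derivative_at)
qed

lemma rot_surface_zu:
  assumes "(P has_real_derivative p') (at u)" "(Q has_real_derivative q') (at u)"
  shows "zu (rot_surface \<alpha> \<beta> P Q) (u, v) = p' *\<^sub>R rot_e 1 2 \<alpha> v + q' *\<^sub>R rot_e 3 4 \<beta> v"
proof -
  have "((\<lambda>s. rot_surface \<alpha> \<beta> P Q (s, v)) has_vector_derivative
          p' *\<^sub>R rot_e 1 2 \<alpha> v + q' *\<^sub>R rot_e 3 4 \<beta> v) (at u)"
    unfolding rot_surface_def using assms by (auto intro!: derivative_eq_intros)
  then show ?thesis by (simp add: zu_def vector_derivative_at)
qed

text \<open>For the second \<open>u\<close>-derivative, \<open>zu\<close> must be known on a neighbourhood of \<open>u\<close>.\<close>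
lemma rot_surface_zuu:
  assumes "open J" "u \<in> J"
    and "\<And>s. s \<in> J \<Longrightarrow> (P has_real_derivative P' s) (at s)"
    and "\<And>s. s \<in> J \<Longrightarrow> (Q has_real_derivative Q' s) (at s)"
    and "(P' has_real_derivative p'') (at u)" "(Q' has_real_derivative q'') (at u)"
  shows "zuu (rot_surface \<alpha> \<beta> P Q) (u, v) = p'' *\<^sub>R rot_e 1 2 \<alpha> v + q'' *\<^sub>R rot_e 3 4 \<beta> v"
proof -
  have "((\<lambda>s. P' s *\<^sub>R rot_e 1 2 \<alpha> v + Q' s *\<^sub>R rot_e 3 4 \<beta> v) has_vector_derivative
          p'' *\<^sub>R rot_e 1 2 \<alpha> v + q'' *\<^sub>R rot_e 3 4 \<beta> v) (at u)"
    using assms(5,6) by (auto intro!: derivative_eq_intros)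
  then have "((\<lambda>s. zu (rot_surface \<alpha> \<beta> P Q) (s, v)) has_vector_derivative
          p'' *\<^sub>R rot_e 1 2 \<alpha> v + q'' *\<^sub>R rot_e 3 4 \<beta> v) (at u)"
    by (rule has_vector_derivative_transform_within_open[OF _ assms(1,2)])
      (simp add: rot_surface_zu[OF assms(3,4)])
  then show ?thesis by (simp add: zuu_def vector_derivative_at)
qed

lemma rot_surface_minimal_at_iff:
  assumes "open J" "u \<in> J"
    and "\<And>s. s \<in> J \<Longrightarrow> (P has_real_derivative P' s) (at s)"
    and "\<And>s. s \<in> J \<Longrightarrow> (Q has_real_derivative Q' s) (at s)"
    and "(P' has_real_derivative p'') (at u)" "(Q' has_real_derivative q'') (at u)"
    and regular: "(P' u)\<^sup>2 + (Q' u)\<^sup>2 > 0" "(\<alpha> * P u)\<^sup>2 + (\<beta> * Q u)\<^sup>2 > 0"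
  shows "mean_curvature_vector (rot_surface \<alpha> \<beta> P Q) (u, v) = 0 \<longleftrightarrow>
           ((\<alpha> * P u)\<^sup>2 + (\<beta> * Q u)\<^sup>2) * (P' u * q'' - Q' u * p'')
           + ((P' u)\<^sup>2 + (Q' u)\<^sup>2) * (\<alpha>\<^sup>2 * P u * Q' u - \<beta>\<^sup>2 * Q u * P' u) = 0"
  using mean_curvature_zero_iff_in_frame[OF rot_orthonormal_frame
      rot_surface_zu[OF assms(3,4)[OF assms(2)]] rot_surface_zv
      rot_surface_zuu[of J u P P' Q Q' p'' q'', OF assms(1-6)] rot_surface_zvv regular]
  by (simp add: algebra_simps)

text \<open>Components of a literal vector in \<open>R^4\<close> (the library provides only dimensions 1 to 3).\<close>
lemma vector_4_components:
  "(vector [x, y, z, w] :: 'a::zero ^ 4) $ 1 = x" "(vector [x, y, z, w] :: 'a::zero ^ 4) $ 2 = y"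
  "(vector [x, y, z, w] :: 'a::zero ^ 4) $ 3 = z" "(vector [x, y, z, w] :: 'a::zero ^ 4) $ 4 = w"
  unfolding vector_def by simp_all

text \<open>Coordinates of \<open>x n + y b1\<close> with respect to \<open>e1\<close> and \<open>e2\<close>; the matrix of
  \<open>(x, y) \<mapsto> (nb_coord1, nb_coord2)\<close> is a rotation.\<close>
definition nb_coord1 :: "real \<Rightarrow> real \<Rightarrow> real \<Rightarrow> real \<Rightarrow> real \<Rightarrow> real \<Rightarrow> real" where
  "nb_coord1 a b \<alpha> \<beta> x y = (b * \<beta>\<^sup>2 * y - a * \<alpha>\<^sup>2 * x) / kap a b \<alpha> \<beta>"

definition nb_coord2 :: "real \<Rightarrow> real \<Rightarrow> real \<Rightarrow> real \<Rightarrow> real \<Rightarrow> real \<Rightarrow> real" where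
  "nb_coord2 a b \<alpha> \<beta> x y = - (b * \<beta>\<^sup>2 * x + a * \<alpha>\<^sup>2 * y) / kap a b \<alpha> \<beta>"

lemma surface_z_eq_rot_surface:
  "surface_z a b \<alpha> \<beta> A B =
     rot_surface \<alpha> \<beta> (\<lambda>s. a + nb_coord1 a b \<alpha> \<beta> (A s) (B s)) (\<lambda>s. b + nb_coord2 a b \<alpha> \<beta> (A s) (B s))"
  by (auto simp: fun_eq_iff surface_z_def rot_surface_def curve_c_def frame_n_def frame_b1_def
      rot_e_def nb_coord1_def nb_coord2_def vec_eq_iff forall_4 vector_4_components axis_def
      add_divide_distrib diff_divide_distrib algebra_simps)

lemma kap_pos:
  assumes "a\<^sup>2 * \<alpha>\<^sup>2 + b\<^sup>2 * \<beta>\<^sup>2 = 1" "\<alpha> \<noteq> 0" "\<beta> \<noteq> 0"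
  shows "kap a b \<alpha> \<beta> > 0" "(kap a b \<alpha> \<beta>)\<^sup>2 = a\<^sup>2 * \<alpha>^4 + b\<^sup>2 * \<beta>^4"
proof -
  have "a \<noteq> 0 \<or> b \<noteq> 0" using assms(1) by auto
  then have "a\<^sup>2 * \<alpha>^4 + b\<^sup>2 * \<beta>^4 > 0"
    using assms(2,3) by (auto intro: add_pos_nonneg add_nonneg_pos)
  then show "kap a b \<alpha> \<beta> > 0" "(kap a b \<alpha> \<beta>)\<^sup>2 = a\<^sup>2 * \<alpha>^4 + b\<^sup>2 * \<beta>^4"
    by (simp_all add: kap_def)
qed

context
  fixes a b \<alpha> \<beta> :: real
  assumes kap_nonzero: "kap a b \<alpha> \<beta> \<noteq> 0"
    and kap_square: "(kap a b \<alpha> \<beta>)\<^sup>2 = a\<^sup>2 * \<alpha>^4 + b\<^sup>2 * \<beta>^4"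
begin

text \<open>The rotation preserves lengths and cross products (its determinant is 1).\<close>
lemma nb_coord_norm:
  "(nb_coord1 a b \<alpha> \<beta> x y)\<^sup>2 + (nb_coord2 a b \<alpha> \<beta> x y)\<^sup>2 = x\<^sup>2 + y\<^sup>2"
proof -
  have "(b * \<beta>\<^sup>2 * y - a * \<alpha>\<^sup>2 * x)\<^sup>2 + (- (b * \<beta>\<^sup>2 * x + a * \<alpha>\<^sup>2 * y))\<^sup>2
        = (kap a b \<alpha> \<beta>)\<^sup>2 * (x\<^sup>2 + y\<^sup>2)"
    unfolding kap_square by algebra
  then show ?thesis
    using kap_nonzero
    by (simp add: nb_coord1_def nb_coord2_def power_divide add_divide_distrib[symmetric])
qed

lemma nb_coord_cross:
  "nb_coord1 a b \<alpha> \<beta> x y * nb_coord2 a b \<alpha> \<beta> x' y' - nb_coord2 a b \<alpha> \<beta> x y * nb_coord1 a b \<alpha> \<beta> x' y'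
     = x * y' - y * x'"
proof -
  have "(b * \<beta>\<^sup>2 * y - a * \<alpha>\<^sup>2 * x) * (- (b * \<beta>\<^sup>2 * x' + a * \<alpha>\<^sup>2 * y'))
        - (- (b * \<beta>\<^sup>2 * x + a * \<alpha>\<^sup>2 * y)) * (b * \<beta>\<^sup>2 * y' - a * \<alpha>\<^sup>2 * x')
        = (kap a b \<alpha> \<beta>)\<^sup>2 * (x * y' - y * x')"
    unfolding kap_square by algebra
  then show ?thesis
    using kap_nonzero
    by (simp add: nb_coord1_def nb_coord2_def power2_eq_square diff_divide_distrib[symmetric])
qed

text \<open>The metric coefficient \<open>G = |z_v|\<^sup>2\<close> expressed through \<open>A, B\<close>.\<close>
lemma frame_metric_identity:
  assumes unit_speed: "a\<^sup>2 * \<alpha>\<^sup>2 + b\<^sup>2 * \<beta>\<^sup>2 = 1"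
  shows "(\<alpha> * (a + nb_coord1 a b \<alpha> \<beta> x y))\<^sup>2 + (\<beta> * (b + nb_coord2 a b \<alpha> \<beta> x y))\<^sup>2
           = (kap a b \<alpha> \<beta> * x - 1)\<^sup>2 + (tau a b \<alpha> \<beta> * x - sig a b \<alpha> \<beta> * y)\<^sup>2"
proof -
  define K where "K = kap a b \<alpha> \<beta>"
  have K: "K \<noteq> 0" "K\<^sup>2 = a\<^sup>2 * \<alpha>^4 + b\<^sup>2 * \<beta>^4" using kap_nonzero kap_square by (simp_all add: K_def)
  have "K\<^sup>2 * ((\<alpha> * (a + nb_coord1 a b \<alpha> \<beta> x y))\<^sup>2 + (\<beta> * (b + nb_coord2 a b \<alpha> \<beta> x y))\<^sup>2)
        = \<alpha>\<^sup>2 * (a * K + b * \<beta>\<^sup>2 * y - a * \<alpha>\<^sup>2 * x)\<^sup>2 + \<beta>\<^sup>2 * (b * K - b * \<beta>\<^sup>2 * x - a * \<alpha>\<^sup>2 * y)\<^sup>2"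
    using K(1) by (simp add: nb_coord1_def nb_coord2_def K_def[symmetric] field_simps power2_eq_square)
  also have "\<dots> = K\<^sup>2 * (K * x - 1)\<^sup>2 + (a * b * \<alpha> * \<beta> * (\<alpha>\<^sup>2 - \<beta>\<^sup>2) * x - \<alpha> * \<beta> * y)\<^sup>2"
    using K(2) unit_speed by algebra
  also have "\<dots> = K\<^sup>2 * ((K * x - 1)\<^sup>2 + (tau a b \<alpha> \<beta> * x - sig a b \<alpha> \<beta> * y)\<^sup>2)"
    using K(1) by (simp add: tau_def sig_def K_def[symmetric] field_simps power2_eq_square)
  finally show ?thesis using K(1) by (simp add: K_def)
qed

text \<open>The contribution of \<open>z_vv\<close> to the minimality equation expressed through \<open>A, B\<close>.\<close>
lemma frame_normal_identity:
  assumes unit_speed: "a\<^sup>2 * \<alpha>\<^sup>2 + b\<^sup>2 * \<beta>\<^sup>2 = 1"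
  shows "\<alpha>\<^sup>2 * (a + nb_coord1 a b \<alpha> \<beta> x y) * nb_coord2 a b \<alpha> \<beta> x' y'
           - \<beta>\<^sup>2 * (b + nb_coord2 a b \<alpha> \<beta> x y) * nb_coord1 a b \<alpha> \<beta> x' y'
         = (kap a b \<alpha> \<beta> * x - 1) * kap a b \<alpha> \<beta> * y'
           + (tau a b \<alpha> \<beta> * x - sig a b \<alpha> \<beta> * y) * (sig a b \<alpha> \<beta> * x' + tau a b \<alpha> \<beta> * y')"
proof -
  define K where "K = kap a b \<alpha> \<beta>"
  have K: "K \<noteq> 0" "K\<^sup>2 = a\<^sup>2 * \<alpha>^4 + b\<^sup>2 * \<beta>^4" using kap_nonzero kap_square by (simp_all add: K_def)
  have "K\<^sup>2 * (\<alpha>\<^sup>2 * (a + nb_coord1 a b \<alpha> \<beta> x y) * nb_coord2 a b \<alpha> \<beta> x' y'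
           - \<beta>\<^sup>2 * (b + nb_coord2 a b \<alpha> \<beta> x y) * nb_coord1 a b \<alpha> \<beta> x' y')
        = - \<alpha>\<^sup>2 * (a * K + b * \<beta>\<^sup>2 * y - a * \<alpha>\<^sup>2 * x) * (b * \<beta>\<^sup>2 * x' + a * \<alpha>\<^sup>2 * y')
          - \<beta>\<^sup>2 * (b * K - b * \<beta>\<^sup>2 * x - a * \<alpha>\<^sup>2 * y) * (b * \<beta>\<^sup>2 * y' - a * \<alpha>\<^sup>2 * x')"
    using K(1) by (simp add: nb_coord1_def nb_coord2_def K_def[symmetric] field_simps power2_eq_square)
  also have "\<dots> = K\<^sup>2 * (K * x - 1) * K * y'
      + (a * b * \<alpha> * \<beta> * (\<alpha>\<^sup>2 - \<beta>\<^sup>2) * x - \<alpha> * \<beta> * y)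
        * (\<alpha> * \<beta> * x' + a * b * \<alpha> * \<beta> * (\<alpha>\<^sup>2 - \<beta>\<^sup>2) * y')"
    using K(2) unit_speed by algebra
  also have "\<dots> = K\<^sup>2 * ((K * x - 1) * K * y'
      + (tau a b \<alpha> \<beta> * x - sig a b \<alpha> \<beta> * y) * (sig a b \<alpha> \<beta> * x' + tau a b \<alpha> \<beta> * y'))"
    using K(1) by (simp add: tau_def sig_def K_def[symmetric] field_simps power2_eq_square)
  finally show ?thesis using K(1) by (simp add: K_def)
qed

end

lemma surface_z_minimal_at_iff:
  assumes "\<alpha> \<noteq> 0" "\<beta> \<noteq> 0" and unit_speed: "a\<^sup>2 * \<alpha>\<^sup>2 + b\<^sup>2 * \<beta>\<^sup>2 = 1"
    and "open J" "u \<in> J"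
    and dA: "\<And>s. s \<in> J \<Longrightarrow> (A has_real_derivative A' s) (at s)"
    and dB: "\<And>s. s \<in> J \<Longrightarrow> (B has_real_derivative B' s) (at s)"
    and ddA: "(A' has_real_derivative a'') (at u)" and ddB: "(B' has_real_derivative b'') (at u)"
    and regular: "(A' u)\<^sup>2 + (B' u)\<^sup>2 > 0"
      "(kap a b \<alpha> \<beta> * A u - 1)\<^sup>2 + (tau a b \<alpha> \<beta> * A u - sig a b \<alpha> \<beta> * B u)\<^sup>2 > 0"
  shows "mean_curvature_vector (surface_z a b \<alpha> \<beta> A B) (u, v) = 0 \<longleftrightarrow>
    (a'' * B' u - A' u * b'') / ((A' u)\<^sup>2 + (B' u)\<^sup>2)
      = ((kap a b \<alpha> \<beta> * A u - 1) * kap a b \<alpha> \<beta> * B' u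
          + (tau a b \<alpha> \<beta> * A u - sig a b \<alpha> \<beta> * B u) * (sig a b \<alpha> \<beta> * A' u + tau a b \<alpha> \<beta> * B' u))
        / ((kap a b \<alpha> \<beta> * A u - 1)\<^sup>2 + (tau a b \<alpha> \<beta> * A u - sig a b \<alpha> \<beta> * B u)\<^sup>2)"
    (is "_ \<longleftrightarrow> _ / ?E = ?N / ?D")
proof -
  have K: "kap a b \<alpha> \<beta> \<noteq> 0" "(kap a b \<alpha> \<beta>)\<^sup>2 = a\<^sup>2 * \<alpha>^4 + b\<^sup>2 * \<beta>^4"
    using kap_pos[OF unit_speed] assms(1,2) by auto
  define P where "P s = a + nb_coord1 a b \<alpha> \<beta> (A s) (B s)" for s
  define Q where "Q s = b + nb_coord2 a b \<alpha> \<beta> (A s) (B s)" for s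
  define P' where "P' s = nb_coord1 a b \<alpha> \<beta> (A' s) (B' s)" for s
  define Q' where "Q' s = nb_coord2 a b \<alpha> \<beta> (A' s) (B' s)" for s
  have "(P has_real_derivative P' s) (at s)" "(Q has_real_derivative Q' s) (at s)" if "s \<in> J" for s
    using dA[OF that] dB[OF that] K(1) unfolding P_def Q_def P'_def Q'_def nb_coord1_def nb_coord2_def
    by (auto intro!: derivative_eq_intros simp: field_simps)
  moreover have "(P' has_real_derivative nb_coord1 a b \<alpha> \<beta> a'' b'') (at u)"
    "(Q' has_real_derivative nb_coord2 a b \<alpha> \<beta> a'' b'') (at u)"
    using ddA ddB K(1) unfolding P'_def Q'_def nb_coord1_def nb_coord2_def
    by (auto intro!: derivative_eq_intros simp: field_simps)
  moreover have "(\<alpha> * P u)\<^sup>2 + (\<beta> * Q u)\<^sup>2 = ?D"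
    using frame_metric_identity[OF K unit_speed] by (simp add: P_def Q_def)
  moreover have "(P' u)\<^sup>2 + (Q' u)\<^sup>2 = ?E"
    using nb_coord_norm[OF K] by (simp add: P'_def Q'_def)
  ultimately have "mean_curvature_vector (surface_z a b \<alpha> \<beta> A B) (u, v) = 0 \<longleftrightarrow>
      ?D * (P' u * nb_coord2 a b \<alpha> \<beta> a'' b'' - Q' u * nb_coord1 a b \<alpha> \<beta> a'' b'')
      + ?E * (\<alpha>\<^sup>2 * P u * Q' u - \<beta>\<^sup>2 * Q u * P' u) = 0"
    using rot_surface_minimal_at_iff[OF \<open>open J\<close> \<open>u \<in> J\<close>, of P P' Q Q'] regular
    by (simp add: surface_z_eq_rot_surface P_def[abs_def] Q_def[abs_def])
  also have "\<dots> \<longleftrightarrow> ?D * (A' u * b'' - a'' * B' u) + ?E * ?N = 0"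
  proof -
    have "P' u * nb_coord2 a b \<alpha> \<beta> a'' b'' - Q' u * nb_coord1 a b \<alpha> \<beta> a'' b''
          = A' u * b'' - a'' * B' u"
      using nb_coord_cross[OF K, of "A' u" "B' u" a'' b''] by (simp add: P'_def Q'_def)
    moreover have "\<alpha>\<^sup>2 * P u * Q' u - \<beta>\<^sup>2 * Q u * P' u = ?N"
      using frame_normal_identity[OF K unit_speed] by (simp add: P_def Q_def P'_def Q'_def)
    ultimately show ?thesis by simp
  qed
  also have "\<dots> \<longleftrightarrow> (a'' * B' u - A' u * b'') / ?E = ?N / ?D"
  proof -
    have "D * (X - Y) + E * N = 0 \<longleftrightarrow> (Y - X) / E = N / D"
      if "E \<noteq> 0" "D \<noteq> 0" for E D N X Y :: real
      using that by (auto simp: frac_eq_eq algebra_simps)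
    moreover have "?E \<noteq> 0" "?D \<noteq> 0" using regular by auto
    ultimately show ?thesis by blast
  qed
  finally show ?thesis .
qed

theorem proposition7p6:
  fixes a b \<alpha> \<beta> :: real and A B :: "real \<Rightarrow> real" and J :: "real set"
  assumes "\<alpha> > 0" and "\<beta> > 0" and "\<alpha> \<noteq> \<beta>"
    and "a\<^sup>2 * \<alpha>\<^sup>2 + b\<^sup>2 * \<beta>\<^sup>2 = 1"
    and "open J" and "is_interval J"
    and "\<And>k x. x \<in> J \<Longrightarrow> ((deriv ^^ k) A) differentiable (at x)"
    and "\<And>k x. x \<in> J \<Longrightarrow> ((deriv ^^ k) B) differentiable (at x)"
    and "\<And>u. u \<in> J \<Longrightarrow> (deriv A u)\<^sup>2 + (deriv B u)\<^sup>2 > 0"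
    and "\<And>u. u \<in> J \<Longrightarrow>
           (kap a b \<alpha> \<beta> * A u - 1)\<^sup>2 + (tau a b \<alpha> \<beta> * A u - sig a b \<alpha> \<beta> * B u)\<^sup>2 > 0"
  shows "minimal_on (surface_z a b \<alpha> \<beta> A B) (J \<times> {0..<2 * pi}) \<longleftrightarrow>
    (\<forall>u\<in>J.
      (deriv (deriv A) u * deriv B u - deriv A u * deriv (deriv B) u)
        / ((deriv A u)\<^sup>2 + (deriv B u)\<^sup>2)
      = ((kap a b \<alpha> \<beta> * A u - 1) * kap a b \<alpha> \<beta> * deriv B u
          + (tau a b \<alpha> \<beta> * A u - sig a b \<alpha> \<beta> * B u)
            * (sig a b \<alpha> \<beta> * deriv A u + tau a b \<alpha> \<beta> * deriv B u))
        / ((kap a b \<alpha> \<beta> * A u - 1)\<^sup>2 + (tau a b \<alpha> \<beta> * A u - sig a b \<alpha> \<beta> * B u)\<^sup>2))"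
proof -
  note deriv_at = DERIV_deriv_iff_real_differentiable[THEN iffD2]
  have "\<alpha> \<noteq> 0" "\<beta> \<noteq> 0" using assms(1,2) by auto
  have dA: "(A has_real_derivative deriv A s) (at s)"
      "(deriv A has_real_derivative deriv (deriv A) s) (at s)"
    and dB: "(B has_real_derivative deriv B s) (at s)"
      "(deriv B has_real_derivative deriv (deriv B) s) (at s)"
    if "s \<in> J" for s
    using assms(7,8)[of s 0] assms(7,8)[of s 1] that by (simp_all add: deriv_at)
  note pointwise = surface_z_minimal_at_iff[OF \<open>\<alpha> \<noteq> 0\<close> \<open>\<beta> \<noteq> 0\<close> assms(4,5) _
      dA(1) dB(1) dA(2) dB(2) assms(9,10)]
  \<comment> \<open>the pointwise condition does not depend on \<open>v\<close>, and the range of \<open>v\<close> is nonempty\<close>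
  have "(0::real) \<in> {0..<2 * pi}" by simp
  then show ?thesis
    unfolding minimal_on_def
    by (auto simp: pointwise)
qed

end
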